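(* Let $G$ be a countable amenable group and fix $A\subset G$. Suppose there exist a two-sided Følner sequence $\Phi$ on $G$ and a non-principal ultrafilter $\mathfrak{p}$ on $G$ such that $\mathsf{d}_\Phi(Ag^{-1}\cap A\mathfrak{p}^{-1})$ exists for all $g\in G$ and $$\lim_{g\to\mathfrak{p}}\mathsf{d}_\Phi(Ag^{-1}\cap A\mathfrak{p}^{-1})>0.$$ Then there exist infinite sets $B,C\subset G$ such that $BC\subset A$.
   Context: A two-sided Følner sequence on $G$ is a sequence $\Phi\colon N\mapsto\Phi_N$ of finite non-empty subsets of $G$ with $|(\Phi_Ng)\triangle\Phi_N|/|\Phi_N|\to0$ and $|\Phi_N\triangle(g\Phi_N)|/|\Phi_N|\to0$ for all $g\in G$. $\mathsf{d}_\Phi(E)=\lim_N|E\cap\Phi_N|/|\Phi_N|$ when it exists. For $g\in G$, $Ag^{-1}=\{h\in G: hg\in A\}$ and $g^{-1}A=\{h\in G: gh\in A\}$; for an ultrafilter $\mathfrak{p}$ on $G$, $A\mathfrak{p}^{-1}=\{g\in G: g^{-1}A\in\mathfrak{p}\}$. $\lim_{g\to\mathfrak{p}}$ denotes the ultrafilter limit of a bounded real-valued function on $G$. $BC=\{bc:b\in B,c\in C\}$. *)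

theory Defs
  imports "HOL-Analysis.Analysis" "HOL-Library.Countable"
begin

text \<open>Groups are written additively (type class group_add, not necessarily commutative):
  the group product g h is g + h.\<close>

definition folner_seq :: "(nat \<Rightarrow> 'a::group_add set) \<Rightarrow> bool" where
  "folner_seq \<Phi> \<longleftrightarrow> (\<forall>N. finite (\<Phi> N) \<and> \<Phi> N \<noteq> {}) \<and>
     (\<forall>g. (\<lambda>N. real (card (((\<lambda>h. h + g) ` \<Phi> N) - \<Phi> N \<union> (\<Phi> N - (\<lambda>h. h + g) ` \<Phi> N)))
              / real (card (\<Phi> N))) \<longlonglongrightarrow> 0)"

definition two_sided_folner_seq :: "(nat \<Rightarrow> 'a::group_add set) \<Rightarrow> bool" where
  "two_sided_folner_seq \<Phi> \<longleftrightarrow> (\<forall>N. finite (\<Phi> N) \<and> \<Phi> N \<noteq> {}) \<and>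
     (\<forall>g. (\<lambda>N. real (card (((\<lambda>h. h + g) ` \<Phi> N) - \<Phi> N \<union> (\<Phi> N - (\<lambda>h. h + g) ` \<Phi> N)))
              / real (card (\<Phi> N))) \<longlonglongrightarrow> 0) \<and>
     (\<forall>g. (\<lambda>N. real (card (((\<lambda>h. g + h) ` \<Phi> N) - \<Phi> N \<union> (\<Phi> N - (\<lambda>h. g + h) ` \<Phi> N)))
              / real (card (\<Phi> N))) \<longlonglongrightarrow> 0)"

definition amenable_group :: "'a::group_add itself \<Rightarrow> bool" where
  "amenable_group _ \<longleftrightarrow> (\<exists>\<Phi>::nat \<Rightarrow> 'a set. folner_seq \<Phi>)"

definition dens_ratio :: "(nat \<Rightarrow> 'a set) \<Rightarrow> 'a set \<Rightarrow> nat \<Rightarrow> real" where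
  "dens_ratio \<Phi> E N = real (card (E \<inter> \<Phi> N)) / real (card (\<Phi> N))"

definition density_exists :: "(nat \<Rightarrow> 'a set) \<Rightarrow> 'a set \<Rightarrow> bool" where
  "density_exists \<Phi> E \<longleftrightarrow> convergent (dens_ratio \<Phi> E)"

definition density :: "(nat \<Rightarrow> 'a set) \<Rightarrow> 'a set \<Rightarrow> real" where
  "density \<Phi> E = lim (dens_ratio \<Phi> E)"

definition ultrafilter :: "'a filter \<Rightarrow> bool" where
  "ultrafilter F \<longleftrightarrow> F \<noteq> bot \<and> (\<forall>P. eventually P F \<or> eventually (\<lambda>x. \<not> P x) F)"

definition nonprincipal :: "'a filter \<Rightarrow> bool" where
  "nonprincipal F \<longleftrightarrow> (\<forall>x. \<not> eventually (\<lambda>y. y = x) F)"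

definition rtrans_inv :: "'a::group_add set \<Rightarrow> 'a \<Rightarrow> 'a set" where
  "rtrans_inv A g = {h. h + g \<in> A}"

text \<open>A p^{-1} = {g. g^{-1}A \<in> p} = {g. eventually (h. gh \<in> A) p}\<close>
definition uf_rtrans_inv :: "'a::group_add set \<Rightarrow> 'a filter \<Rightarrow> 'a set" where
  "uf_rtrans_inv A p = {g. eventually (\<lambda>h. g + h \<in> A) p}"

end

theory Submission
  imports Defs
begin

text \<open>
  Let \<mu> be an ultrafilter limit of the densities along \<Phi>. It is monotone, vanishes on finite
  sets (as card (\<Phi> N) grows) and, by Cauchy--Schwarz, satisfies
  (\<Sum>i. \<mu> S_i)^2 \<le> \<Sum>i j. \<mu> (S_i \<inter> S_j). Write E g = A g^-1 \<inter> A p^-1. The inequality shows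
  that if lim_{g \<rightarrow> p} \<mu> (T \<inter> E g) > 0, then also lim_{g \<rightarrow> p} \<mu> (T \<inter> E c \<inter> E g) > 0
  for p-almost every c: otherwise one finds arbitrarily many c with \<mu> (T \<inter> E c) bounded below
  and pairwise almost disjoint. Starting from T = A p^-1, pick alternately such a c_n, generic
  enough that b_i c_n \<in> A for the earlier b_i \<in> A p^-1, and a new b_n in the set
  A p^-1 \<inter> A c_0^-1 \<inter> ... \<inter> A c_n^-1, which still has positive measure and so is infinite.
  B = {b_n} and C = {c_n} are the required sets.
\<close>

lemma ultrafilter_not_eventually:
  "ultrafilter F \<Longrightarrow> \<not> eventually P F \<Longrightarrow> eventually (\<lambda>x. \<not> P x) F"
  unfolding ultrafilter_def by blast

lemma nonprincipal_eventually_notin_finite: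
  assumes "ultrafilter p" "nonprincipal p" "finite X"
  shows "eventually (\<lambda>y. y \<notin> X) p"
proof -
  have "eventually (\<lambda>y. y \<noteq> x) p" for x
  proof -
    have "\<not> eventually (\<lambda>y. y = x) p"
      using assms(2) by (simp add: nonprincipal_def)
    then show ?thesis
      by (rule ultrafilter_not_eventually[OF assms(1)])
  qed
  then have "eventually (\<lambda>y. \<forall>x\<in>X. y \<noteq> x) p"
    by (simp add: eventually_ball_finite assms(3))
  then show ?thesis
    by (rule eventually_mono) blast
qed

lemma nonprincipal_ultrafilter_infinite_UNIV:
  assumes "ultrafilter (p :: 'a filter)" "nonprincipal p"
  shows "infinite (UNIV :: 'a set)"
proof
  assume "finite (UNIV :: 'a set)"
  from nonprincipal_eventually_notin_finite[OF assms this]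
  have "eventually (\<lambda>_. False) p"
    by simp
  then show False
    using assms(1) by (simp add: ultrafilter_def)
qed

lemma ultrafilter_filtermap: "ultrafilter F \<Longrightarrow> ultrafilter (filtermap f F)"
  by (simp add: ultrafilter_def eventually_filtermap filtermap_bot_iff)

lemma nonprincipal_filtermap_inj:
  assumes "inj f" "nonprincipal F"
  shows "nonprincipal (filtermap f F)"
  unfolding nonprincipal_def eventually_filtermap
proof
  fix y
  show "\<not> eventually (\<lambda>x. f x = y) F"
  proof
    assume "eventually (\<lambda>x. f x = y) F"
    then have "eventually (\<lambda>x. x = inv f y) F"
      by eventually_elim (simp add: inv_f_eq[OF assms(1)])
    with assms(2) show False
      by (simp add: nonprincipal_def)
  qed
qed

lemma nonprincipal_ultrafilter_le_sequentially:
  assumes "ultrafilter (r :: nat filter)" "nonprincipal r"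
  shows "r \<le> sequentially"
  unfolding le_filter_def cofinite_eq_sequentially[symmetric] eventually_cofinite
proof (intro allI impI)
  fix P :: "nat \<Rightarrow> bool" assume "finite {x. \<not> P x}"
  from nonprincipal_eventually_notin_finite[OF assms this]
  show "eventually P r" by simp
qed

lemma countable_ex_ultrafilter_le_sequentially:
  assumes "ultrafilter (p :: 'a::countable filter)" "nonprincipal p"
  obtains r :: "nat filter" where "ultrafilter r" "r \<le> sequentially"
proof
  let ?r = "filtermap to_nat p"
  show "ultrafilter ?r"
    using assms(1) by (rule ultrafilter_filtermap)
  moreover have "nonprincipal ?r"
    using assms(2) by (rule nonprincipal_filtermap_inj[OF inj_to_nat])
  ultimately show "?r \<le> sequentially"
    by (rule nonprincipal_ultrafilter_le_sequentially)
qed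

lemma ultrafilter_tendsto_Lim:
  fixes f :: "'b \<Rightarrow> 'c::t2_space"
  assumes F: "ultrafilter F" and K: "compact K" and ev: "eventually (\<lambda>x. f x \<in> K) F"
  shows "(f \<longlongrightarrow> Lim F f) F"
proof -
  have F_ne: "F \<noteq> bot"
    using F by (simp add: ultrafilter_def)
  then have "filtermap f F \<noteq> bot" "eventually (\<lambda>y. y \<in> K) (filtermap f F)"
    using ev by (simp_all add: filtermap_bot_iff eventually_filtermap)
  then obtain x where x: "inf (nhds x) (filtermap f F) \<noteq> bot"
    using K unfolding compact_filter by blast
  have "(f \<longlongrightarrow> x) F"
    unfolding tendsto_def
  proof (intro allI impI)
    fix S assume S: "open S" "x \<in> S"
    show "eventually (\<lambda>y. f y \<in> S) F"
    proof (rule ccontr)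
      assume "\<not> eventually (\<lambda>y. f y \<in> S) F"
      then have "eventually (\<lambda>y. y \<notin> S) (filtermap f F)"
        using ultrafilter_not_eventually[OF F] by (simp add: eventually_filtermap)
      moreover have "eventually (\<lambda>y. y \<in> S) (nhds x)"
        using S by (rule eventually_nhds_in_open)
      ultimately have "eventually (\<lambda>_. False) (inf (nhds x) (filtermap f F))"
        unfolding eventually_inf by blast
      with x show False by simp
    qed
  qed
  with F_ne show ?thesis
    by (simp add: tendsto_Lim)
qed

lemma eventually_pairwise_subset:
  assumes F: "F \<noteq> bot" and good: "eventually P F"
    and near: "\<And>x. P x \<Longrightarrow> eventually (R x) F"
    and irrefl: "\<And>x. P x \<Longrightarrow> \<not> R x x" and sym: "symp R"
  shows "\<exists>C. finite C \<and> card C = k \<and> (\<forall>c\<in>C. P c) \<and> pairwise R C"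
proof (induction k)
  case 0
  show ?case by (intro exI[of _ "{}"]) simp
next
  case (Suc k)
  then obtain C where C: "finite C" "card C = k" "\<forall>c\<in>C. P c" "pairwise R C"
    by blast
  have "eventually (\<lambda>g. \<forall>c\<in>C. R c g) F"
    using C(1,3) near by (simp add: eventually_ball_finite)
  with good obtain g where g: "P g" "\<forall>c\<in>C. R c g"
    using eventually_happens'[OF F] eventually_conj by blast
  have "g \<notin> C"
    using g irrefl by blast
  moreover have "pairwise R (insert g C)"
    using C(4) g(2) sym by (auto simp: pairwise_insert dest: sympD)
  ultimately show ?case
    using C g(1) by (intro exI[of _ "insert g C"]) auto
qed

lemma infinite_Union_strict_chain:
  assumes "\<And>n. X n \<subset> X (Suc n)"
  shows "infinite (\<Union>n. X n)"
proof -
  have "\<forall>n. \<exists>y. y \<in> X (Suc n) - X n"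
    using assms by (meson psubset_imp_ex_mem)
  then obtain x where x: "\<And>n. x n \<in> X (Suc n) - X n"
    by metis
  have "inj x"
  proof (rule linorder_injI)
    fix m n :: nat assume "m < n"
    then have "X (Suc m) \<subseteq> X n"
      using lift_Suc_mono_le[of X] assms by (simp add: less_imp_le)
    then show "x m \<noteq> x n"
      using x[of m] x[of n] by (metis Diff_iff subsetD)
  qed
  moreover have "range x \<subseteq> (\<Union>n. X n)"
    using x by blast
  ultimately show ?thesis
    using range_inj_infinite infinite_super by blast
qed

lemma infinite_product_of_extension:
  assumes start: "Q {} {}"
    and extend: "\<And>B C. Q B C \<Longrightarrow> \<exists>b c. b \<notin> B \<and> c \<notin> C \<and> Q (insert b B) (insert c C)"
    and rel: "\<And>B C. Q B C \<Longrightarrow> \<forall>b\<in>B. \<forall>c\<in>C. R b c"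
  shows "\<exists>B C. infinite B \<and> infinite C \<and> (\<forall>b\<in>B. \<forall>c\<in>C. R b c)"
proof -
  have step: "\<exists>s'. Q (fst s') (snd s') \<and> fst s \<subset> fst s' \<and> snd s \<subset> snd s'"
    if Q_s: "Q (fst s) (snd s)" for s
  proof -
    obtain b c where "b \<notin> fst s" "c \<notin> snd s" "Q (insert b (fst s)) (insert c (snd s))"
      using extend[OF Q_s] by blast
    then show ?thesis
      by (intro exI[of _ "(insert b (fst s), insert c (snd s))"]) auto
  qed
  have "\<exists>s0. Q (fst s0) (snd s0)"
    using start by (intro exI[of _ "({}, {})"]) simp
  from dependent_nat_choice[of "\<lambda>_ s. Q (fst s) (snd s)"
      "\<lambda>_ s s'. fst s \<subset> fst s' \<and> snd s \<subset> snd s'", OF this step]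
  obtain s where s_all: "\<forall>n. Q (fst (s n)) (snd (s n)) \<and>
      fst (s n) \<subset> fst (s (Suc n)) \<and> snd (s n) \<subset> snd (s (Suc n))"
    by blast
  then have s: "\<And>n. Q (fst (s n)) (snd (s n))"
    and grow: "\<And>n. fst (s n) \<subset> fst (s (Suc n)) \<and> snd (s n) \<subset> snd (s (Suc n))"
    by simp_all
  have mono: "fst (s m) \<subseteq> fst (s n) \<and> snd (s m) \<subseteq> snd (s n)" if "m \<le> n" for m n
    using lift_Suc_mono_le[of "\<lambda>n. fst (s n)", OF _ that]
      lift_Suc_mono_le[of "\<lambda>n. snd (s n)", OF _ that] grow by blast
  have "\<forall>b\<in>(\<Union>n. fst (s n)). \<forall>c\<in>(\<Union>n. snd (s n)). R b c"
  proof (intro ballI)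
    fix b c assume "b \<in> (\<Union>n. fst (s n))" "c \<in> (\<Union>n. snd (s n))"
    then obtain i j where "b \<in> fst (s i)" "c \<in> snd (s j)"
      by blast
    then have "b \<in> fst (s (max i j))" "c \<in> snd (s (max i j))"
      using mono[of i "max i j"] mono[of j "max i j"] by auto
    then show "R b c"
      using rel[OF s] by blast
  qed
  moreover have "infinite (\<Union>n. fst (s n))"
    by (rule infinite_Union_strict_chain) (use grow in blast)
  moreover have "infinite (\<Union>n. snd (s n))"
    by (rule infinite_Union_strict_chain) (use grow in blast)
  ultimately show ?thesis
    by blast
qed

locale quadratic_density =
  fixes \<mu> :: "'a set \<Rightarrow> real"
  assumes le_one: "\<mu> S \<le> 1"
    and mono: "S \<subseteq> S' \<Longrightarrow> \<mu> S \<le> \<mu> S'"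
    and finite_zero: "finite S \<Longrightarrow> \<mu> S = 0"
    and sum_sq_le: "finite (I :: 'a set) \<Longrightarrow>
      (\<Sum>i\<in>I. \<mu> (X i))\<^sup>2 \<le> (\<Sum>i\<in>I. \<Sum>j\<in>I. \<mu> (X i \<inter> X j))"
begin

lemma nonneg: "0 \<le> \<mu> S"
  using mono[of "{}" S] finite_zero[of "{}"] by simp

lemma tendsto_Lim_ultrafilter:
  assumes "ultrafilter p"
  shows "((\<lambda>g. \<mu> (S g)) \<longlongrightarrow> Lim p (\<lambda>g. \<mu> (S g))) p"
  using ultrafilter_tendsto_Lim[OF assms compact_Icc[of 0 1]] nonneg le_one by simp

lemma card_mult_le_of_almost_disjoint:
  assumes C: "finite (C :: 'a set)"
    and large: "\<And>c. c \<in> C \<Longrightarrow> \<delta> \<le> \<mu> (X c)"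
    and small: "\<And>c c'. c \<in> C \<Longrightarrow> c' \<in> C \<Longrightarrow> c \<noteq> c' \<Longrightarrow> \<mu> (X c \<inter> X c') \<le> \<eta>"
    and "0 \<le> \<delta>" "0 \<le> \<eta>"
  shows "real (card C) * (\<delta>\<^sup>2 - \<eta>) \<le> 1"
proof -
  define m where "m = real (card C)"
  have "(m * \<delta>)\<^sup>2 \<le> (\<Sum>c\<in>C. \<mu> (X c))\<^sup>2"
  proof (rule power_mono)
    show "m * \<delta> \<le> (\<Sum>c\<in>C. \<mu> (X c))"
      using sum_mono[of C "\<lambda>_. \<delta>" "\<lambda>c. \<mu> (X c)"] large by (simp add: m_def)
  qed (simp add: m_def \<open>0 \<le> \<delta>\<close>)
  also have "\<dots> \<le> (\<Sum>c\<in>C. \<Sum>c'\<in>C. \<mu> (X c \<inter> X c'))"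
    by (rule sum_sq_le[OF C])
  also have "\<dots> \<le> (\<Sum>c\<in>C. \<Sum>c'\<in>C. \<eta> + (if c' = c then 1 else 0))"
  proof (intro sum_mono)
    fix c c' assume "c \<in> C" "c' \<in> C"
    then show "\<mu> (X c \<inter> X c') \<le> \<eta> + (if c' = c then 1 else 0)"
      using small[of c c'] le_one[of "X c \<inter> X c'"] \<open>0 \<le> \<eta>\<close> by (cases "c' = c") auto
  qed
  also have "\<dots> = m * (m * \<eta> + 1)"
    using C by (simp add: sum.distrib m_def)
  finally have sq: "m * (m * \<delta>\<^sup>2) \<le> m * (m * \<eta> + 1)"
    by (simp add: power2_eq_square algebra_simps)
  have "m * (\<delta>\<^sup>2 - \<eta>) \<le> 1"
  proof (cases "m = 0")
    case False
    then have "m * \<delta>\<^sup>2 \<le> m * \<eta> + 1"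
      using mult_left_le_imp_le[OF sq] by (simp add: m_def)
    then show ?thesis
      by (simp add: algebra_simps)
  qed simp
  then show ?thesis
    by (simp add: m_def)
qed

lemma sq_le_of_eventually_almost_disjoint:
  assumes p: "ultrafilter (p :: 'a filter)"
    and ev: "eventually (\<lambda>c. \<delta> \<le> \<mu> (T \<inter> E c) \<and> Lim p (\<lambda>g. \<mu> (T \<inter> E c \<inter> E g)) < \<eta>) p"
    and \<eta>: "0 \<le> \<eta>" "\<eta> < \<delta>"
  shows "\<delta>\<^sup>2 \<le> \<eta>"
proof (rule ccontr)
  assume "\<not> \<delta>\<^sup>2 \<le> \<eta>"
  then obtain m :: nat where m: "1 / (\<delta>\<^sup>2 - \<eta>) < m" "0 < \<delta>\<^sup>2 - \<eta>"
    using reals_Archimedean2 by fastforce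
  have p_ne: "p \<noteq> bot"
    using p by (simp add: ultrafilter_def)
  define good where "good = (\<lambda>c. \<delta> \<le> \<mu> (T \<inter> E c) \<and> Lim p (\<lambda>g. \<mu> (T \<inter> E c \<inter> E g)) < \<eta>)"
  define near where "near = (\<lambda>c g. \<mu> (T \<inter> E c \<inter> E g) < \<eta>)"
  have near: "eventually (near c) p" if "good c" for c
  proof -
    have "Lim p (\<lambda>g. \<mu> (T \<inter> E c \<inter> E g)) < \<eta>"
      using that by (simp add: good_def)
    then show ?thesis
      unfolding near_def by (rule order_tendstoD(2)[OF tendsto_Lim_ultrafilter[OF p]])
  qed
  have irrefl: "\<not> near c c" if "good c" for c
    using that \<eta> by (simp add: good_def near_def)
  have sym: "symp near"
    by (auto simp: symp_def near_def Int_ac)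
  obtain C where C: "finite C" "card C = m" "\<forall>c\<in>C. good c" "pairwise near C"
    using eventually_pairwise_subset[OF p_ne ev[folded good_def] near irrefl sym] by blast
  have "real (card C) * (\<delta>\<^sup>2 - \<eta>) \<le> 1"
  proof (rule card_mult_le_of_almost_disjoint[where X = "\<lambda>c. T \<inter> E c"])
    show "\<delta> \<le> \<mu> (T \<inter> E c)" if "c \<in> C" for c
      using C(3) that by (auto simp: good_def)
    show "\<mu> ((T \<inter> E c) \<inter> (T \<inter> E c')) \<le> \<eta>" if "c \<in> C" "c' \<in> C" "c \<noteq> c'" for c c'
    proof -
      have "(T \<inter> E c) \<inter> (T \<inter> E c') = T \<inter> E c \<inter> E c'"
        by blast
      then show ?thesis
        using C(4) that by (auto simp: pairwise_def near_def intro: less_imp_le)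
    qed
  qed (use C(1) \<eta> in auto)
  with m C(2) show False
    by (simp add: divide_less_eq)
qed

lemma eventually_Lim_inter_pos:
  assumes p: "ultrafilter (p :: 'a filter)" and pos: "0 < Lim p (\<lambda>g. \<mu> (T \<inter> E g))"
  shows "eventually (\<lambda>c. 0 < Lim p (\<lambda>g. \<mu> (T \<inter> E c \<inter> E g))) p"
proof (rule ccontr)
  define a where "a = Lim p (\<lambda>g. \<mu> (T \<inter> E g))"
  have p_ne: "p \<noteq> bot"
    using p by (simp add: ultrafilter_def)
  have a: "0 < a" "a \<le> 1"
    using pos tendsto_upperbound[OF tendsto_Lim_ultrafilter[OF p] _ p_ne] le_one
    by (auto simp: a_def)
  then have "a * a \<le> a"
    by (simp add: mult_left_le_one_le)
  then have \<eta>: "0 \<le> a\<^sup>2 / 8" "a\<^sup>2 / 8 < a / 2"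
    using a by (auto simp: power2_eq_square)
  assume "\<not> ?thesis"
  then have null: "eventually (\<lambda>c. \<not> 0 < Lim p (\<lambda>g. \<mu> (T \<inter> E c \<inter> E g))) p"
    by (rule ultrafilter_not_eventually[OF p])
  have "a / 2 < a"
    using a by simp
  then have large: "eventually (\<lambda>c. a / 2 < \<mu> (T \<inter> E c)) p"
    unfolding a_def by (rule order_tendstoD(1)[OF tendsto_Lim_ultrafilter[OF p]])
  have "0 < a\<^sup>2 / 8"
    using a by simp
  from null large have "eventually (\<lambda>c. a / 2 \<le> \<mu> (T \<inter> E c) \<and>
      Lim p (\<lambda>g. \<mu> (T \<inter> E c \<inter> E g)) < a\<^sup>2 / 8) p"
  proof eventually_elim
    case (elim c)
    with \<open>0 < a\<^sup>2 / 8\<close> show ?case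
      by (intro conjI; linarith)
  qed
  from sq_le_of_eventually_almost_disjoint[OF p this \<eta>] a(1) show False
    by (simp add: power_divide)
qed

lemma infinite_of_Lim_pos:
  assumes "ultrafilter p" "0 < Lim p (\<lambda>g. \<mu> (T \<inter> E g))"
  shows "infinite T"
proof
  assume "finite T"
  then have "(\<lambda>g. \<mu> (T \<inter> E g)) = (\<lambda>_. 0)"
    by (simp add: finite_zero)
  moreover have "Lim p (\<lambda>_. 0) = (0 :: real)"
    using assms(1) by (simp add: tendsto_Lim ultrafilter_def)
  ultimately show False
    using assms(2) by simp
qed

end

definition joint_rtrans_inv :: "'a::group_add set \<Rightarrow> 'a filter \<Rightarrow> 'a set \<Rightarrow> 'a set" where
  "joint_rtrans_inv A p C = uf_rtrans_inv A p \<inter> (\<Inter>c\<in>C. rtrans_inv A c)"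

lemma joint_rtrans_inv_insert:
  "joint_rtrans_inv A p (insert c C) = joint_rtrans_inv A p C \<inter> joint_rtrans_inv A p {c}"
  by (auto simp: joint_rtrans_inv_def)

definition extendable_pair ::
    "('a set \<Rightarrow> real) \<Rightarrow> 'a::group_add set \<Rightarrow> 'a filter \<Rightarrow> 'a set \<Rightarrow> 'a set \<Rightarrow> bool" where
  "extendable_pair \<mu> A p B C \<longleftrightarrow> finite B \<and> finite C \<and> B \<subseteq> uf_rtrans_inv A p \<and>
     (\<forall>b\<in>B. \<forall>c\<in>C. b + c \<in> A) \<and>
     0 < Lim p (\<lambda>g. \<mu> (joint_rtrans_inv A p C \<inter> joint_rtrans_inv A p {g}))"

lemma extendable_pair_extend:
  assumes \<mu>: "quadratic_density \<mu>" and p: "ultrafilter p" "nonprincipal p"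
    and BC: "extendable_pair \<mu> A p B C"
  shows "\<exists>b c. b \<notin> B \<and> c \<notin> C \<and> extendable_pair \<mu> A p (insert b B) (insert c C)"
proof -
  let ?J = "joint_rtrans_inv A p"
  have B: "finite B" "B \<subseteq> uf_rtrans_inv A p" and C: "finite C"
    and BC_A: "\<forall>b\<in>B. \<forall>c\<in>C. b + c \<in> A"
    and pos: "0 < Lim p (\<lambda>g. \<mu> (?J C \<inter> ?J {g}))"
    using BC unfolding extendable_pair_def by blast+
  have "eventually (\<lambda>c. 0 < Lim p (\<lambda>g. \<mu> (?J C \<inter> ?J {c} \<inter> ?J {g}))) p"
    by (rule quadratic_density.eventually_Lim_inter_pos[OF \<mu> p(1) pos])
  moreover have "eventually (\<lambda>c. \<forall>b\<in>B. b + c \<in> A) p"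
    using B(2) by (intro eventually_ball_finite[OF B(1)]) (auto simp: uf_rtrans_inv_def)
  moreover have "eventually (\<lambda>c. c \<notin> C) p"
    by (rule nonprincipal_eventually_notin_finite[OF p C])
  ultimately have "eventually (\<lambda>c. 0 < Lim p (\<lambda>g. \<mu> (?J C \<inter> ?J {c} \<inter> ?J {g})) \<and>
      (\<forall>b\<in>B. b + c \<in> A) \<and> c \<notin> C) p"
    by (intro eventually_conj)
  from eventually_happens'[OF _ this] p(1)
  obtain c where c: "0 < Lim p (\<lambda>g. \<mu> (?J C \<inter> ?J {c} \<inter> ?J {g}))"
      "\<forall>b\<in>B. b + c \<in> A" "c \<notin> C"
    by (auto simp: ultrafilter_def)
  then have c_pos: "0 < Lim p (\<lambda>g. \<mu> (?J (insert c C) \<inter> ?J {g}))"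
    by (simp only: joint_rtrans_inv_insert[of A p c C])
  have "infinite (?J (insert c C))"
    by (rule quadratic_density.infinite_of_Lim_pos[OF \<mu> p(1) c_pos])
  then have "?J (insert c C) - B \<noteq> {}"
    by (intro infinite_imp_nonempty Diff_infinite_finite[OF B(1)])
  then obtain b where b: "b \<in> ?J (insert c C)" "b \<notin> B"
    by auto
  have "extendable_pair \<mu> A p (insert b B) (insert c C)"
    unfolding extendable_pair_def
  proof (intro conjI)
    show "0 < Lim p (\<lambda>g. \<mu> (?J (insert c C) \<inter> ?J {g}))"
      by (rule c_pos)
    show "\<forall>b'\<in>insert b B. \<forall>c'\<in>insert c C. b' + c' \<in> A"
      using b(1) c(2) BC_A by (auto simp: joint_rtrans_inv_def rtrans_inv_def)
    show "insert b B \<subseteq> uf_rtrans_inv A p"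
      using b(1) B(2) by (simp add: joint_rtrans_inv_def)
  qed (use B C in simp_all)
  with b(2) c(3) show ?thesis
    by blast
qed

lemma infinite_product_subset_of_recurrence:
  assumes "quadratic_density \<mu>" "ultrafilter p" "nonprincipal p"
    and "0 < Lim p (\<lambda>g. \<mu> (rtrans_inv A g \<inter> uf_rtrans_inv A p))"
  shows "\<exists>B C. infinite B \<and> infinite C \<and> {b + c | b c. b \<in> B \<and> c \<in> C} \<subseteq> A"
proof -
  have "joint_rtrans_inv A p {} \<inter> joint_rtrans_inv A p {g} = rtrans_inv A g \<inter> uf_rtrans_inv A p"
    for g by (auto simp: joint_rtrans_inv_def)
  then have start: "extendable_pair \<mu> A p {} {}"
    using assms(4) by (simp add: extendable_pair_def)
  have rel: "\<forall>b\<in>B. \<forall>c\<in>C. b + c \<in> A" if "extendable_pair \<mu> A p B C" for B C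
    using that by (simp add: extendable_pair_def)
  obtain B C where "infinite B" "infinite C" "\<forall>b\<in>B. \<forall>c\<in>C. b + c \<in> A"
    using infinite_product_of_extension[OF start extendable_pair_extend[OF assms(1-3)] rel]
    by blast
  then show ?thesis
    by (intro exI[of _ B] exI[of _ C]) auto
qed

lemma dens_ratio_nonneg: "0 \<le> dens_ratio \<Phi> S N"
  by (simp add: dens_ratio_def)

lemma dens_ratio_le_one:
  assumes "finite (\<Phi> N)"
  shows "dens_ratio \<Phi> S N \<le> 1"
proof -
  have "card (S \<inter> \<Phi> N) \<le> card (\<Phi> N)"
    using assms by (intro card_mono) auto
  then show ?thesis
    unfolding dens_ratio_def by (cases "card (\<Phi> N) = 0") (simp_all add: divide_le_eq_1)
qed

lemma dens_ratio_mono: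
  assumes "finite (\<Phi> N)" "S \<subseteq> S'"
  shows "dens_ratio \<Phi> S N \<le> dens_ratio \<Phi> S' N"
proof -
  have "card (S \<inter> \<Phi> N) \<le> card (S' \<inter> \<Phi> N)"
    using assms by (intro card_mono) auto
  then show ?thesis
    unfolding dens_ratio_def by (simp add: divide_right_mono)
qed

lemma sum_card_inter_sq_le:
  assumes P: "finite P" and I: "finite I"
  shows "(\<Sum>i\<in>I. real (card (S i \<inter> P)))\<^sup>2
    \<le> real (card P) * (\<Sum>i\<in>I. \<Sum>j\<in>I. real (card (S i \<inter> S j \<inter> P)))"
proof -
  define h where "h x = (\<Sum>i\<in>I. indicator (S i) x :: real)" for x
  have card_eq: "real (card (U \<inter> P)) = (\<Sum>x\<in>P. indicator U x)" for U
  proof -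
    have "real (card (U \<inter> P)) = real (\<Sum>x\<in>P. indicator U x :: nat)"
      using sum_indicator_eq_card[OF P, of U] by (simp add: Int_commute)
    also have "\<dots> = (\<Sum>x\<in>P. indicator U x)"
      by (simp add: real_of_nat_indicator)
    finally show ?thesis .
  qed
  have "(h x)\<^sup>2 = (\<Sum>i\<in>I. \<Sum>j\<in>I. indicator (S i \<inter> S j) x)" for x
    unfolding h_def power2_eq_square sum_product by (simp add: indicator_inter_arith)
  then have sq_eq: "(\<Sum>i\<in>I. \<Sum>j\<in>I. real (card (S i \<inter> S j \<inter> P))) = (\<Sum>x\<in>P. (h x)\<^sup>2)"
    unfolding card_eq by (simp add: sum.swap[of _ P])
  have "(\<Sum>i\<in>I. real (card (S i \<inter> P))) = (\<Sum>x\<in>P. h x * 1)"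
    unfolding card_eq h_def by (simp add: sum.swap[of _ I])
  then have "(\<Sum>i\<in>I. real (card (S i \<inter> P)))\<^sup>2 = (\<Sum>x\<in>P. h x * 1)\<^sup>2"
    by (rule arg_cong)
  also have "\<dots> \<le> (\<Sum>x\<in>P. (h x)\<^sup>2) * (\<Sum>x\<in>P. 1\<^sup>2)"
    by (rule Cauchy_Schwarz_ineq_sum)
  also have "\<dots> = real (card P) * (\<Sum>i\<in>I. \<Sum>j\<in>I. real (card (S i \<inter> S j \<inter> P)))"
    unfolding sq_eq by (simp add: mult.commute)
  finally show ?thesis .
qed

lemma dens_ratio_sum_sq_le:
  assumes "finite (\<Phi> N)" "finite I"
  shows "(\<Sum>i\<in>I. dens_ratio \<Phi> (S i) N)\<^sup>2 \<le> (\<Sum>i\<in>I. \<Sum>j\<in>I. dens_ratio \<Phi> (S i \<inter> S j) N)"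
proof -
  define n where "n = real (card (\<Phi> N))"
  have "(\<Sum>i\<in>I. dens_ratio \<Phi> (S i) N)\<^sup>2 = (\<Sum>i\<in>I. real (card (S i \<inter> \<Phi> N)))\<^sup>2 / n\<^sup>2"
    by (simp add: dens_ratio_def n_def sum_divide_distrib[symmetric] power_divide)
  also have "\<dots> \<le> n * (\<Sum>i\<in>I. \<Sum>j\<in>I. real (card (S i \<inter> S j \<inter> \<Phi> N))) / n\<^sup>2"
    using sum_card_inter_sq_le[OF assms] by (simp add: n_def divide_right_mono)
  also have "\<dots> = (\<Sum>i\<in>I. \<Sum>j\<in>I. dens_ratio \<Phi> (S i \<inter> S j) N)"
    by (simp add: dens_ratio_def n_def sum_divide_distrib[symmetric] power2_eq_square)
  finally show ?thesis .
qed

definition uf_density :: "nat filter \<Rightarrow> (nat \<Rightarrow> 'a set) \<Rightarrow> 'a set \<Rightarrow> real" where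
  "uf_density r \<Phi> S = Lim r (dens_ratio \<Phi> S)"

lemma tendsto_uf_density:
  assumes "ultrafilter r" "\<And>N. finite (\<Phi> N)"
  shows "(dens_ratio \<Phi> S \<longlongrightarrow> uf_density r \<Phi> S) r"
  unfolding uf_density_def
  by (rule ultrafilter_tendsto_Lim[OF assms(1) compact_Icc[of 0 1]])
    (simp add: assms(2) dens_ratio_nonneg dens_ratio_le_one)

lemma uf_density_eq_lim:
  assumes "ultrafilter r" "r \<le> sequentially" "dens_ratio \<Phi> S \<longlonglongrightarrow> l"
  shows "uf_density r \<Phi> S = l"
  using assms tendsto_mono[OF assms(2,3)] unfolding uf_density_def
  by (simp add: tendsto_Lim ultrafilter_def)

lemma uf_density_eq_density:
  assumes "ultrafilter r" "r \<le> sequentially" "density_exists \<Phi> S"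
  shows "uf_density r \<Phi> S = density \<Phi> S"
  using assms(3) uf_density_eq_lim[OF assms(1,2)]
  by (simp add: density_exists_def density_def convergent_LIMSEQ_iff)

lemma quadratic_density_uf_density:
  fixes \<Phi> :: "nat \<Rightarrow> 'a set"
  assumes r: "ultrafilter r" "r \<le> sequentially" and fin: "\<And>N. finite (\<Phi> N)"
    and grow: "filterlim (\<lambda>N. card (\<Phi> N)) at_top sequentially"
  shows "quadratic_density (uf_density r \<Phi>)"
proof
  have r_ne: "\<not> trivial_limit r"
    using r(1) by (simp add: ultrafilter_def)
  note lim = tendsto_uf_density[OF r(1) fin]
  show "uf_density r \<Phi> S \<le> 1" for S
    using lim by (rule tendsto_upperbound) (simp_all add: r_ne fin dens_ratio_le_one)
  show "uf_density r \<Phi> S \<le> uf_density r \<Phi> S'" if "S \<subseteq> S'" for S S'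
    using r_ne lim lim by (rule tendsto_le) (simp add: fin that dens_ratio_mono)
  show "uf_density r \<Phi> F = 0" if F: "finite F" for F
  proof (rule uf_density_eq_lim[OF r])
    have "filterlim (\<lambda>N. real (card (\<Phi> N))) at_infinity sequentially"
      using filterlim_compose[OF filterlim_real_sequentially grow]
      by (simp add: filterlim_at_top_imp_at_infinity)
    then have lim0: "(\<lambda>N. real (card F) / real (card (\<Phi> N))) \<longlonglongrightarrow> 0"
      by (rule tendsto_divide_0[OF tendsto_const])
    have "dens_ratio \<Phi> F N \<le> real (card F) / real (card (\<Phi> N))" for N
    proof -
      have "card (F \<inter> \<Phi> N) \<le> card F"
        using F by (intro card_mono) auto
      then show ?thesis
        unfolding dens_ratio_def by (simp add: divide_right_mono)
    qed
    then show "dens_ratio \<Phi> F \<longlonglongrightarrow> 0"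
      by (intro tendsto_sandwich[OF _ _ tendsto_const lim0]) (simp_all add: dens_ratio_nonneg)
  qed
  show "(\<Sum>i\<in>I. uf_density r \<Phi> (X i))\<^sup>2 \<le> (\<Sum>i\<in>I. \<Sum>j\<in>I. uf_density r \<Phi> (X i \<inter> X j))"
    if I: "finite (I :: 'a set)" for I X
  proof (rule tendsto_le[OF r_ne])
    show "((\<lambda>N. \<Sum>i\<in>I. \<Sum>j\<in>I. dens_ratio \<Phi> (X i \<inter> X j) N)
        \<longlongrightarrow> (\<Sum>i\<in>I. \<Sum>j\<in>I. uf_density r \<Phi> (X i \<inter> X j))) r"
      by (intro tendsto_sum lim)
    show "((\<lambda>N. (\<Sum>i\<in>I. dens_ratio \<Phi> (X i) N)\<^sup>2) \<longlongrightarrow> (\<Sum>i\<in>I. uf_density r \<Phi> (X i))\<^sup>2) r"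
      by (intro tendsto_power tendsto_sum lim)
    show "eventually (\<lambda>N. (\<Sum>i\<in>I. dens_ratio \<Phi> (X i) N)\<^sup>2
        \<le> (\<Sum>i\<in>I. \<Sum>j\<in>I. dens_ratio \<Phi> (X i \<inter> X j) N)) r"
      using I by (simp add: fin dens_ratio_sum_sq_le)
  qed
qed

lemma card_le_of_small_translation_diff:
  fixes P K :: "'a::group_add set"
  assumes P: "finite P" "P \<noteq> {}"
    and small: "\<And>g. g \<in> K \<Longrightarrow>
      real (card (sym_diff ((\<lambda>h. h + g) ` P) P)) * real (card K) < real (card P)"
  shows "card K \<le> card P"
proof (cases "\<exists>g\<in>K. (\<lambda>h. h + g) ` P \<noteq> P")
  case True
  then obtain g where g: "g \<in> K" "(\<lambda>h. h + g) ` P \<noteq> P"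
    by blast
  let ?D = "sym_diff ((\<lambda>h. h + g) ` P) P"
  have "?D \<noteq> {}"
    using g(2) by blast
  then have "1 \<le> card ?D"
    using P(1) by (simp add: Suc_le_eq card_gt_0_iff)
  then have "real (card K) \<le> real (card ?D) * real (card K)"
    by (simp add: mult_le_cancel_right1)
  with small[OF g(1)] show ?thesis
    by simp
next
  case False
  from P(2) obtain x where x: "x \<in> P"
    by blast
  have "(\<lambda>g. x + g) ` K \<subseteq> P"
    using False x by blast
  moreover have "inj_on (\<lambda>g. x + g) K"
    by (simp add: inj_on_def)
  ultimately show ?thesis
    using P(1) by (metis card_image card_mono)
qed

lemma two_sided_folner_seq_imp_folner_seq: "two_sided_folner_seq \<Phi> \<Longrightarrow> folner_seq \<Phi>"
  by (simp add: two_sided_folner_seq_def folner_seq_def)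

lemma folner_seq_card_tendsto:
  fixes \<Phi> :: "nat \<Rightarrow> 'a::group_add set"
  assumes \<Phi>: "folner_seq \<Phi>" and inf: "infinite (UNIV :: 'a set)"
  shows "filterlim (\<lambda>N. card (\<Phi> N)) at_top sequentially"
  unfolding filterlim_at_top
proof
  fix M :: nat
  show "eventually (\<lambda>N. M \<le> card (\<Phi> N)) sequentially"
  proof (cases "M = 0")
    case False
    obtain K :: "'a set" where K: "finite K" "card K = M"
      using infinite_arbitrarily_large[OF inf] by blast
    let ?D = "\<lambda>g N. sym_diff ((\<lambda>h. h + g) ` \<Phi> N) (\<Phi> N)"
    have fin: "finite (\<Phi> N)" "\<Phi> N \<noteq> {}" for N
      using \<Phi> by (simp_all add: folner_seq_def)
    have "\<forall>g\<in>K. eventually (\<lambda>N. real (card (?D g N)) / real (card (\<Phi> N)) < 1 / M) sequentially"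
      using \<Phi> False by (auto simp: folner_seq_def intro: order_tendstoD(2))
    then have "eventually (\<lambda>N. \<forall>g\<in>K. real (card (?D g N)) / real (card (\<Phi> N)) < 1 / M) sequentially"
      using K(1) by (simp add: eventually_ball_finite)
    then show ?thesis
    proof eventually_elim
      case (elim N)
      then have "real (card (?D g N)) * real (card K) < real (card (\<Phi> N))" if "g \<in> K" for g
        using that fin[of N] False K(2) by (simp add: field_simps card_gt_0_iff)
      then show ?case
        using card_le_of_small_translation_diff[OF fin] K(2) by blast
    qed
  qed simp
qed

theorem theorem5p2:
  fixes A :: "'a::{group_add, countable} set"
    and \<Phi> :: "nat \<Rightarrow> 'a set"
    and p :: "'a filter"
  assumes "amenable_group TYPE('a)"
    and "two_sided_folner_seq \<Phi>"
    and "ultrafilter p" and "nonprincipal p"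
    and "\<forall>g. density_exists \<Phi> (rtrans_inv A g \<inter> uf_rtrans_inv A p)"
    and "\<exists>L>0. ((\<lambda>g. density \<Phi> (rtrans_inv A g \<inter> uf_rtrans_inv A p)) \<longlongrightarrow> L) p"
  shows "\<exists>B C. infinite B \<and> infinite C \<and> {b + c | b c. b \<in> B \<and> c \<in> C} \<subseteq> A"
proof -
  let ?E = "\<lambda>g. rtrans_inv A g \<inter> uf_rtrans_inv A p"
  note p = assms(3,4)
  obtain r :: "nat filter" where r: "ultrafilter r" "r \<le> sequentially"
    using countable_ex_ultrafilter_le_sequentially[OF p] .
  have \<mu>: "quadratic_density (uf_density r \<Phi>)"
  proof (rule quadratic_density_uf_density[OF r])
    show "finite (\<Phi> N)" for N
      using assms(2) by (simp add: two_sided_folner_seq_def)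
    show "filterlim (\<lambda>N. card (\<Phi> N)) at_top sequentially"
      using folner_seq_card_tendsto[OF two_sided_folner_seq_imp_folner_seq[OF assms(2)]]
        nonprincipal_ultrafilter_infinite_UNIV[OF p] .
  qed
  have "(\<lambda>g. uf_density r \<Phi> (?E g)) = (\<lambda>g. density \<Phi> (?E g))"
    using assms(5) by (simp add: uf_density_eq_density[OF r])
  moreover obtain L where "0 < L" "((\<lambda>g. density \<Phi> (?E g)) \<longlongrightarrow> L) p"
    using assms(6) by blast
  ultimately have "0 < Lim p (\<lambda>g. uf_density r \<Phi> (?E g))"
    using p(1) by (simp add: tendsto_Lim ultrafilter_def)
  then show ?thesis
    by (rule infinite_product_subset_of_recurrence[OF \<mu> p])
qed

end
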